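(* Let $m>0$, $n$ an odd positive integer, $V=[-m/2,m/2]$. For every dataset $D\in V^n$ and every $\ell\in V$, $$\mathrm{SWDIFF}(D,\ell)=|\mathcal{T}(D)-\ell|+2\sum_{j\in C(D,\ell)}|x_j-\ell|,$$ where $C(D,\ell)$ is the set of crossed agents.
   Context: A dataset is $D=(x_1,\dots,x_n)\in V^n$ of agent locations, indexed so that $x_1\le\dots\le x_n$. The optimal facility location is the median $\mathcal{T}(D)=x_{\lceil n/2\rceil}$. The social welfare of a facility at $\ell$ is $s(D,\ell)=-\sum_{i=1}^n|x_i-\ell|$, and $\mathrm{SWDIFF}(D,\ell)=s(D,\mathcal{T}(D))-s(D,\ell)$. The set of crossed agents is $C(D,\ell)=\{i: i<\lceil n/2\rceil,\ x_i\in[\ell,\mathcal{T}(D)]\}$ if $\ell<\mathcal{T}(D)$; $C(D,\ell)=\{i: i>\lceil n/2\rceil,\ x_i\in[\mathcal{T}(D),\ell]\}$ if $\ell>\mathcal{T}(D)$; and $C(D,\ell)=\emptyset$ if $\ell=\mathcal{T}(D)$. *)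

theory Defs
  imports "HOL-Analysis.Analysis"
begin

text \<open>A dataset D = (x_1,...,x_n) is modelled as a function x :: nat => real,
  indexed over {1..n}, sorted nondecreasingly.\<close>

definition med_idx :: "nat \<Rightarrow> nat" where
  "med_idx n = nat \<lceil>real n / 2\<rceil>"

definition opt_loc :: "nat \<Rightarrow> (nat \<Rightarrow> real) \<Rightarrow> real" where
  "opt_loc n x = x (med_idx n)"

definition social_welfare :: "nat \<Rightarrow> (nat \<Rightarrow> real) \<Rightarrow> real \<Rightarrow> real" where
  "social_welfare n x l = - (\<Sum>i=1..n. \<bar>x i - l\<bar>)"

definition swdiff :: "nat \<Rightarrow> (nat \<Rightarrow> real) \<Rightarrow> real \<Rightarrow> real" where
  "swdiff n x l = social_welfare n x (opt_loc n x) - social_welfare n x l"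

definition crossed :: "nat \<Rightarrow> (nat \<Rightarrow> real) \<Rightarrow> real \<Rightarrow> nat set" where
  "crossed n x l =
     (if l < opt_loc n x then {i \<in> {1..n}. i < med_idx n \<and> x i \<in> {l..opt_loc n x}}
      else if l > opt_loc n x then {i \<in> {1..n}. i > med_idx n \<and> x i \<in> {opt_loc n x..l}}
      else {})"

end

theory Submission
  imports Defs
begin

text \<open>Moving the facility from the median \<open>T\<close> to \<open>l\<close> changes the cost of each agent by
  \<open>|x\<^sub>i - l| - |x\<^sub>i - T|\<close>. The \<open>(n+1)/2\<close> agents at or beyond the median, seen from \<open>l\<close>,
  each lose exactly \<open>|T - l|\<close>; the \<open>(n-1)/2\<close> agents on the side of \<open>l\<close> each gain \<open>|T - l|\<close>,
  except that an agent lying between \<open>l\<close> and \<open>T\<close> (a crossed agent) gains \<open>2|x\<^sub>i - l|\<close> less.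
  The gains and losses cancel up to a single \<open>|T - l|\<close>.\<close>

lemma sum_signed_excess:
  fixes g h :: "'a \<Rightarrow> real"
  assumes "finite A" "finite B" "A \<inter> B = {}" "C \<subseteq> B" "card A = card B + 1"
    and "\<And>i. i \<in> A \<Longrightarrow> g i = d"
    and "\<And>i. i \<in> B \<Longrightarrow> g i = (if i \<in> C then h i else 0) - d"
  shows "(\<Sum>i\<in>A \<union> B. g i) = d + (\<Sum>i\<in>C. h i)"
proof -
  have "(\<Sum>i\<in>A \<union> B. g i) = (\<Sum>i\<in>A. g i) + (\<Sum>i\<in>B. g i)"
    using assms(1-3) by (rule sum.union_disjoint)
  also have "(\<Sum>i\<in>A. g i) = card A * d"
    using assms(6) by simp
  also have "(\<Sum>i\<in>B. g i) = (\<Sum>i\<in>B. if i \<in> C then h i else 0) - card B * d"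
    using assms(7) by (simp add: sum_subtractf)
  also have "(\<Sum>i\<in>B. if i \<in> C then h i else 0) = (\<Sum>i\<in>C. h i)"
    using sum.inter_restrict[OF assms(2), of h C] assms(4) by (simp add: Int_absorb1)
  finally show ?thesis
    using assms(5) by (simp add: algebra_simps)
qed

lemma med_idx_odd:
  assumes "odd n"
  shows "2 * med_idx n = n + 1"
proof -
  obtain q where q: "n = 2 * q + 1"
    using assms oddE by blast
  then have "\<lceil>real n / 2\<rceil> = int q + 1"
    by linarith
  then show ?thesis
    unfolding med_idx_def using q by simp
qed

lemma swdiff_eq_sum:
  "swdiff n x l = (\<Sum>i=1..n. \<bar>x i - l\<bar> - \<bar>x i - opt_loc n x\<bar>)"
  unfolding swdiff_def social_welfare_def by (simp add: sum_subtractf)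

lemma swdiff_left_of_median:
  fixes x :: "nat \<Rightarrow> real"
  assumes "odd n" and sorted: "mono_on {1..n} x" and left: "l < opt_loc n x"
  shows "swdiff n x l = (opt_loc n x - l) + 2 * (\<Sum>j\<in>crossed n x l. \<bar>x j - l\<bar>)"
proof -
  define k where "k = med_idx n"
  define T where "T = opt_loc n x"
  have k: "2 * k = n + 1"
    unfolding k_def using med_idx_odd[OF \<open>odd n\<close>] .
  have T: "T = x k"
    unfolding T_def opt_loc_def k_def ..
  have crossed: "crossed n x l = {i \<in> {1..<k}. l \<le> x i \<and> x i \<le> T}"
    using left k unfolding crossed_def T_def k_def by auto
  have "{1..n} = {k..n} \<union> {1..<k}"
    using k by auto
  then have "swdiff n x l = (\<Sum>i\<in>{k..n} \<union> {1..<k}. \<bar>x i - l\<bar> - \<bar>x i - T\<bar>)"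
    unfolding swdiff_eq_sum T_def by simp
  also have "\<dots> = (T - l) + (\<Sum>j\<in>crossed n x l. 2 * \<bar>x j - l\<bar>)"
  proof (rule sum_signed_excess)
    show "card {k..n} = card {1..<k} + 1"
      using k by simp
    show "\<bar>x i - l\<bar> - \<bar>x i - T\<bar> = T - l" if "i \<in> {k..n}" for i
      using mono_onD[OF sorted, of k i] that k left T T_def by auto
    show "\<bar>x i - l\<bar> - \<bar>x i - T\<bar> = (if i \<in> crossed n x l then 2 * \<bar>x i - l\<bar> else 0) - (T - l)"
      if "i \<in> {1..<k}" for i
      using mono_onD[OF sorted, of i k] that k T unfolding crossed by auto
  qed (auto simp: crossed)
  finally show ?thesis
    unfolding T_def by (simp add: sum_distrib_left)
qed

lemma swdiff_right_of_median:
  fixes x :: "nat \<Rightarrow> real"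
  assumes "odd n" and sorted: "mono_on {1..n} x" and right: "opt_loc n x < l"
  shows "swdiff n x l = (l - opt_loc n x) + 2 * (\<Sum>j\<in>crossed n x l. \<bar>x j - l\<bar>)"
proof -
  define k where "k = med_idx n"
  define T where "T = opt_loc n x"
  have k: "2 * k = n + 1"
    unfolding k_def using med_idx_odd[OF \<open>odd n\<close>] .
  have T: "T = x k"
    unfolding T_def opt_loc_def k_def ..
  have crossed: "crossed n x l = {i \<in> {k<..n}. T \<le> x i \<and> x i \<le> l}"
    using right k unfolding crossed_def T_def k_def by auto
  have "{1..n} = {1..k} \<union> {k<..n}"
    using k by auto
  then have "swdiff n x l = (\<Sum>i\<in>{1..k} \<union> {k<..n}. \<bar>x i - l\<bar> - \<bar>x i - T\<bar>)"
    unfolding swdiff_eq_sum T_def by simp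
  also have "\<dots> = (l - T) + (\<Sum>j\<in>crossed n x l. 2 * \<bar>x j - l\<bar>)"
  proof (rule sum_signed_excess)
    show "card {1..k} = card {k<..n} + 1"
      using k by simp
    show "\<bar>x i - l\<bar> - \<bar>x i - T\<bar> = l - T" if "i \<in> {1..k}" for i
      using mono_onD[OF sorted, of i k] that k right T T_def by auto
    show "\<bar>x i - l\<bar> - \<bar>x i - T\<bar> = (if i \<in> crossed n x l then 2 * \<bar>x i - l\<bar> else 0) - (l - T)"
      if "i \<in> {k<..n}" for i
      using mono_onD[OF sorted, of k i] that k T unfolding crossed by auto
  qed (auto simp: crossed)
  finally show ?thesis
    unfolding T_def by (simp add: sum_distrib_left)
qed

theorem theorem4p3:
  fixes m :: real and n :: nat and x :: "nat \<Rightarrow> real" and l :: real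
  assumes "m > 0" and "odd n"
    and "\<forall>i\<in>{1..n}. x i \<in> {-m/2..m/2}"
    and "\<forall>i j. 1 \<le> i \<longrightarrow> i \<le> j \<longrightarrow> j \<le> n \<longrightarrow> x i \<le> x j"
    and "l \<in> {-m/2..m/2}"
  shows "swdiff n x l = \<bar>opt_loc n x - l\<bar> + 2 * (\<Sum>j\<in>crossed n x l. \<bar>x j - l\<bar>)"
proof -
  have sorted: "mono_on {1..n} x"
    using assms(4) by (intro mono_onI) auto
  consider "l < opt_loc n x" | "opt_loc n x < l" | "l = opt_loc n x"
    by linarith
  then show ?thesis
  proof cases
    case 1
    then show ?thesis
      using swdiff_left_of_median[OF \<open>odd n\<close> sorted] by simp
  next
    case 2
    then show ?thesis
      using swdiff_right_of_median[OF \<open>odd n\<close> sorted] by simp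
  next
    case 3
    then show ?thesis
      unfolding swdiff_def crossed_def by simp
  qed
qed

end
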